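(* Let $p$ and $q$ be two distinct odd primes and let $\delta$ be a positive divisor of $\lambda(pq)$. Then $$\sum_{\substack{a\in U_{pq}\\ \mathrm{ind}_{pq}(a)=\delta}}a\equiv \mu\big((\delta,p-1)\big)\, I\!\left(\Big(\frac{\delta}{(\delta,p-1)},\,p-1\Big)\right)\frac{\phi(\delta)}{\phi((\delta,p-1))}\pmod p.$$
   Context: $U_m$ denotes the set of invertible residue classes in $\mathbb{Z}/m\mathbb{Z}$ (the sum runs over one representative of each such class). For $a$ coprime to $m$, $\mathrm{ind}_m(a)$ is the multiplicative order of $a$ modulo $m$. $\lambda(m)$ is the Carmichael function: the smallest $k>0$ such that $a^k\equiv 1\pmod m$ for all $a\in U_m$. $\mu$ is the Möbius function, $\phi$ Euler's totient function, $(x,y)$ the greatest common divisor, and $I(n)=\lfloor 1/n\rfloor$ for positive integers $n$ (so $I(1)=1$ and $I(n)=0$ for $n>1$). *)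

theory Defs
  imports "HOL-Number_Theory.Number_Theory" "HOL-Computational_Algebra.Squarefree"
begin

definition moebius_mu :: "nat \<Rightarrow> int" where
  "moebius_mu n = (if n = 0 then 0 else if squarefree n then (-1) ^ card (prime_factors n) else 0)"

definition carmichael :: "nat \<Rightarrow> nat" where
  "carmichael m = (LEAST k. k > 0 \<and> (\<forall>a. coprime a m \<longrightarrow> [a ^ k = 1] (mod m)))"

definition Ifl :: "nat \<Rightarrow> int" where
  "Ifl n = \<lfloor>1 / real n\<rfloor>"

end

theory Submission
  imports Defs
begin

text \<open>
  Let \<open>S(k)\<close> be the sum of the residues \<open>a\<close> modulo \<open>pq\<close> with \<open>a\<^sup>k = 1\<close>. By the Chinese
  remainder theorem, \<open>S(k)\<close> is congruent modulo \<open>p\<close> to the sum of the \<open>k\<close>-th roots of unity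
  modulo \<open>p\<close> times the number of \<open>k\<close>-th roots of unity modulo \<open>q\<close>. For \<open>k\<close> dividing
  \<open>\<lambda>(pq) = lcm(p - 1, q - 1)\<close> this is \<open>k\<close> if \<open>(k, p - 1) = 1\<close>, since then \<open>1\<close> is the only root
  modulo \<open>p\<close> and \<open>k\<close> divides \<open>q - 1\<close>; otherwise it is \<open>0\<close>, because multiplication by a root
  of order \<open>(k, p - 1) > 1\<close> permutes the roots modulo \<open>p\<close>. Grouping the roots by their
  order, \<open>S(k)\<close> is the divisor sum over \<open>d | k\<close> of the sums of the units of order \<open>d\<close>.
  The right-hand side \<open>F(d)\<close> of the theorem satisfies the same divisor-sum identity: the
  sum of \<open>F(d)\<close> over \<open>d | k\<close> is \<open>k\<close> if \<open>(k, p - 1) = 1\<close> and \<open>0\<close> otherwise (pair \<open>d\<close> with \<open>l d\<close>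
  for a prime \<open>l\<close> dividing both). Inverting over the divisors of \<open>\<lambda>(pq)\<close> gives the congruence.
\<close>

section \<open>Divisor sums\<close>

lemma Ifl_Suc_0 [simp]: "Ifl (Suc 0) = 1"
  by (simp add: Ifl_def)

lemma Ifl_eq_0: "k > 1 \<Longrightarrow> Ifl k = 0"
  unfolding Ifl_def by (intro floor_unique) (auto simp: field_simps)

lemma moebius_mu_Suc_0 [simp]: "moebius_mu (Suc 0) = 1"
  by (simp add: moebius_mu_def)

lemma moebius_mu_prime_mult:
  assumes "prime l" "\<not> l dvd g" "g > 0"
  shows "moebius_mu (l * g) = - moebius_mu g"
proof -
  have "coprime l g"
    using assms by (simp add: prime_imp_coprime)
  then have "squarefree (l * g) \<longleftrightarrow> squarefree g"
    using squarefree_mult_coprime squarefree_prime[OF \<open>prime l\<close>] squarefree_mono[of g "l * g"]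
    by auto
  moreover have "prime_factors (l * g) = insert l (prime_factors g)"
    using assms prime_factors_product[of l g] prime_prime_factors[of l] by (auto simp: prime_gt_0_nat)
  moreover have "l \<notin> prime_factors g"
    using assms by auto
  ultimately show ?thesis
    using assms by (auto simp: moebius_mu_def prime_gt_0_nat)
qed

lemma moebius_mu_eq_0:
  assumes "prime l" "l\<^sup>2 dvd g"
  shows "moebius_mu g = 0"
  using assms not_squarefreeI[of l g] prime_gt_1_nat[of l] by (simp add: moebius_mu_def)

lemma sum_divisors_eq_0_if_prime_mult_cancels:
  fixes f :: "nat \<Rightarrow> 'a::ab_group_add"
  assumes l: "prime l" "l dvd k" and "k > 0"
    and mult: "\<And>d. d dvd k \<Longrightarrow> \<not> l dvd d \<Longrightarrow> f (l * d) = - f d"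
    and square: "\<And>d. d dvd k \<Longrightarrow> l\<^sup>2 dvd d \<Longrightarrow> f d = 0"
  shows "(\<Sum>d | d dvd k. f d) = 0"
proof -
  define A where "A = {d. d dvd k \<and> \<not> l dvd d}"
  define B where "B = {d. d dvd k \<and> l dvd d \<and> \<not> l\<^sup>2 dvd d}"
  define C where "C = {d. d dvd k \<and> l\<^sup>2 dvd d}"
  have fin: "finite A" "finite B" "finite C"
    using \<open>k > 0\<close> by (auto simp: A_def B_def C_def)
  have divisors: "{d. d dvd k} = A \<union> B \<union> C"
    by (auto simp: A_def B_def C_def)
  have B_image: "B = (\<lambda>d. l * d) ` A"
  proof (intro equalityI subsetI)
    fix d assume "d \<in> B"
    then obtain e where "d = l * e" "e dvd k" "\<not> l dvd e"
      by (auto simp: B_def power2_eq_square elim!: dvdE intro: dvd_mult_right)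
    then show "d \<in> (\<lambda>d. l * d) ` A"
      by (auto simp: A_def)
  next
    fix d assume "d \<in> (\<lambda>d. l * d) ` A"
    then obtain e where "d = l * e" "e dvd k" "\<not> l dvd e"
      by (auto simp: A_def)
    moreover have "coprime l e"
      using \<open>\<not> l dvd e\<close> l(1) by (simp add: prime_imp_coprime)
    ultimately show "d \<in> B"
      using l by (auto simp: B_def power2_eq_square divides_mult prime_gt_0_nat)
  qed
  have "sum f B = (\<Sum>d\<in>A. f (l * d))"
    unfolding B_image using l(1) by (subst sum.reindex) (auto simp: inj_on_def prime_gt_0_nat)
  also have "\<dots> = - sum f A"
    by (simp add: A_def mult sum_negf)
  finally have "sum f A + sum f B = 0"
    by simp
  moreover have "sum f C = 0"
    by (simp add: C_def square)
  moreover have "A \<inter> B = {}" "(A \<union> B) \<inter> C = {}"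
    by (auto simp: A_def B_def C_def)
  ultimately show ?thesis
    unfolding divisors using fin by (simp add: sum.union_disjoint)
qed

lemma cong_divisor_sums_imp_cong:
  fixes f g :: "nat \<Rightarrow> 'a::unique_euclidean_ring"
  assumes sums: "\<And>k. k > 0 \<Longrightarrow> k dvd L \<Longrightarrow> [(\<Sum>e | e dvd k. f e) = (\<Sum>e | e dvd k. g e)] (mod m)"
  shows "d > 0 \<Longrightarrow> d dvd L \<Longrightarrow> [f d = g d] (mod m)"
proof (induction d rule: less_induct)
  case (less d)
  define D where "D = {e. e dvd d} - {d}"
  have divisors: "finite {e. e dvd d}" "d \<in> {e. e dvd d}"
    using less.prems by simp_all
  have "[f d + sum f D = g d + sum g D] (mod m)"
    using sums[OF less.prems] unfolding D_def sum.remove[OF divisors] .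
  moreover have "[sum f D = sum g D] (mod m)"
  proof (rule cong_sum)
    fix e assume "e \<in> D"
    then have "e dvd d" "e \<noteq> d"
      by (auto simp: D_def)
    have "e < d"
      using \<open>e dvd d\<close> \<open>e \<noteq> d\<close> less.prems(1) by (simp add: dvd_imp_le le_neq_implies_less)
    moreover have "e > 0"
      using \<open>e dvd d\<close> less.prems(1) by (auto intro: Nat.gr0I)
    moreover have "e dvd L"
      using \<open>e dvd d\<close> less.prems(2) by (rule dvd_trans)
    ultimately show "[f e = g e] (mod m)"
      by (rule less.IH)
  qed
  ultimately have "[(f d + sum f D) - sum f D = (g d + sum g D) - sum g D] (mod m)"
    by (rule cong_diff)
  then show ?case
    by simp
qed

text \<open>The right-hand side of the theorem, with \<open>n = p - 1\<close> and \<open>d = \<delta>\<close>.\<close>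

definition ord_sum_residue :: "nat \<Rightarrow> nat \<Rightarrow> int" where
  "ord_sum_residue n d =
     moebius_mu (gcd d n) * Ifl (gcd (d div gcd d n) n) * int (totient d div totient (gcd d n))"

lemma ord_sum_residue_coprime: "coprime d n \<Longrightarrow> ord_sum_residue n d = int (totient d)"
  by (simp add: ord_sum_residue_def)

lemma ord_sum_residue_prime_mult:
  assumes l: "prime l" "l dvd n" "\<not> l dvd d" and "n > 0"
  shows "ord_sum_residue n (l * d) = - ord_sum_residue n d"
proof -
  have "coprime l d"
    using l by (simp add: prime_imp_coprime)
  obtain m where "n = l * m"
    using l(2) by (auto elim: dvdE)
  then have gcd_eq: "gcd (l * d) n = l * gcd d n"
    using \<open>coprime l d\<close> by (simp add: gcd_mult_distrib_nat gcd_mult_right_left_cancel coprime_commute)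
  have "\<not> l dvd gcd d n"
    using l(3) by (meson dvd_trans gcd_dvd1)
  then have "moebius_mu (gcd (l * d) n) = - moebius_mu (gcd d n)"
    unfolding gcd_eq using l(1) \<open>n > 0\<close> by (intro moebius_mu_prime_mult) auto
  moreover have "l * d div gcd (l * d) n = d div gcd d n"
    unfolding gcd_eq using l(1) by (simp add: prime_gt_0_nat)
  moreover have "totient (l * d) div totient (gcd (l * d) n) = totient d div totient (gcd d n)"
    unfolding gcd_eq using \<open>coprime l d\<close> \<open>\<not> l dvd gcd d n\<close> l(1)
    by (simp add: totient_mult_coprime prime_imp_coprime prime_gt_0_nat)
  ultimately show ?thesis
    by (simp add: ord_sum_residue_def)
qed

lemma ord_sum_residue_eq_0:
  assumes l: "prime l" "l dvd n" "l\<^sup>2 dvd d" and "n > 0"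
  shows "ord_sum_residue n d = 0"
proof (cases "l\<^sup>2 dvd gcd d n")
  case True
  then show ?thesis
    using moebius_mu_eq_0[OF l(1)] by (simp add: ord_sum_residue_def)
next
  case False
  define g where "g = gcd d n"
  have "l dvd g"
    using l by (auto simp: g_def power2_eq_square intro: dvd_mult_left)
  then obtain g' where g': "g = l * g'"
    by (auto elim: dvdE)
  have "\<not> l dvd g'"
    using False g' unfolding g_def[symmetric] by (auto simp: power2_eq_square)
  have "d = g * (d div g)"
    by (simp add: g_def)
  then have "l * l dvd l * (g' * (d div g))"
    using l(3) g' by (metis power2_eq_square mult.assoc)
  then have "l dvd g' * (d div g)"
    using l(1) by (simp add: prime_gt_0_nat)
  then have "l dvd gcd (d div g) n"
    using \<open>\<not> l dvd g'\<close> l by (simp add: prime_dvd_mult_iff)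
  then have "gcd (d div g) n > 1"
    using \<open>n > 0\<close> l(1) dvd_imp_le[of l "gcd (d div g) n"] prime_gt_1_nat[of l] by simp
  then show ?thesis
    by (simp add: ord_sum_residue_def g_def Ifl_eq_0)
qed

lemma sum_divisors_ord_sum_residue:
  assumes "n > 0" "k > 0"
  shows "(\<Sum>d | d dvd k. ord_sum_residue n d) = (if coprime k n then int k else 0)"
proof (cases "coprime k n")
  case True
  then have "(\<Sum>d | d dvd k. ord_sum_residue n d) = (\<Sum>d | d dvd k. int (totient d))"
    by (intro sum.cong refl ord_sum_residue_coprime) (auto intro: coprime_divisors[OF _ dvd_refl])
  then show ?thesis
    using True by (simp flip: of_nat_sum add: totient_divisor_sum)
next
  case False
  then obtain l where "prime l" "l dvd k" "l dvd n"
    using \<open>k > 0\<close> by (metis gcd_dvd1 gcd_dvd2 prime_factor_nat coprime_iff_gcd_eq_1 dvd_trans)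
  then show ?thesis
    using False assms
    by (simp add: sum_divisors_eq_0_if_prime_mult_cancels ord_sum_residue_prime_mult ord_sum_residue_eq_0)
qed

section \<open>Roots of unity\<close>

definition units_of_order :: "nat \<Rightarrow> nat \<Rightarrow> nat set" where
  "units_of_order m d = {a \<in> {0..<m}. coprime a m \<and> ord m a = d}"

definition roots_of_unity :: "nat \<Rightarrow> nat \<Rightarrow> nat set" where
  "roots_of_unity m k = {x \<in> {..<m}. [x ^ k = 1] (mod m)}"

lemma sum_roots_of_unity_eq_sum_units_of_order:
  assumes "k > 0"
  shows "\<Sum>(roots_of_unity m k) = (\<Sum>d | d dvd k. \<Sum>(units_of_order m d))"
proof -
  have "roots_of_unity m k = (\<Union>d\<in>{d. d dvd k}. units_of_order m d)"
  proof (intro equalityI subsetI)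
    fix a assume a: "a \<in> roots_of_unity m k"
    then have "ord m a dvd k"
      by (simp add: roots_of_unity_def ord_divides')
    with \<open>k > 0\<close> have "coprime a m"
      using ord_eq_0[of m a] by (auto simp: coprime_commute)
    with a \<open>ord m a dvd k\<close> show "a \<in> (\<Union>d\<in>{d. d dvd k}. units_of_order m d)"
      by (auto simp: roots_of_unity_def units_of_order_def)
  qed (auto simp: roots_of_unity_def units_of_order_def ord_divides')
  then show ?thesis
    by (simp only:) (rule sum.UNION_disjoint, use \<open>k > 0\<close> in \<open>auto simp: units_of_order_def\<close>)
qed

lemma roots_of_unity_mult_mod:
  assumes "m > 0" "x \<in> roots_of_unity m k" "y \<in> roots_of_unity m k"
  shows "x * y mod m \<in> roots_of_unity m k"
proof -
  have "[(x * y mod m) ^ k = x ^ k * y ^ k] (mod m)"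
    by (simp add: cong_def power_mod power_mult_distrib)
  also have "[x ^ k * y ^ k = 1 * 1] (mod m)"
    using assms by (intro cong_mult) (auto simp: roots_of_unity_def)
  finally show ?thesis
    using \<open>m > 0\<close> by (simp add: roots_of_unity_def)
qed

lemma prime_ord_exists:
  assumes "prime p" "d dvd p - 1"
  obtains a where "a \<in> totatives p" "ord p a = d"
proof -
  have "d > 0"
    using assms prime_gt_1_nat[of p] by (auto intro: Nat.gr0I)
  then have "card {a \<in> totatives p. ord p a = d} \<noteq> 0"
    using assms prime_card_elements_with_ord_eq_totient[of p d] prime_gt_1_nat[of p] by simp
  then have "{a \<in> totatives p. ord p a = d} \<noteq> {}"
    by (metis card.empty)
  with that show ?thesis
    by blast
qed

lemma card_roots_of_unity_prime:
  assumes "prime p" "k dvd p - 1"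
  shows "card (roots_of_unity p k) = k"
proof -
  obtain a where a: "a \<in> totatives p" "ord p a = k"
    using prime_ord_exists[OF assms] .
  show ?thesis
  proof (cases "a = 1")
    case True
    then have "k = 1"
      using a by simp
    moreover have "roots_of_unity p 1 = {1}"
      using prime_gt_1_nat[OF \<open>prime p\<close>] by (auto simp: roots_of_unity_def cong_def)
    ultimately show ?thesis
      by simp
  next
    case False
    have "card {x \<in> totatives p. ord p x = k} \<noteq> 0"
      using a by (auto simp: card_eq_0_iff totatives_def)
    from prime_elements_with_ord(1,2)[OF _ this assms(1) a False] prime_gt_1_nat[OF \<open>prime p\<close>]
    show ?thesis
      by (simp add: roots_of_unity_def card_image)
  qed
qed

lemma roots_of_unity_prime_coprime:
  assumes "prime p" "k > 0" "coprime k (p - 1)"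
  shows "roots_of_unity p k = {1}"
proof (intro equalityI subsetI)
  fix x assume x: "x \<in> roots_of_unity p k"
  then have "ord p x dvd k"
    by (simp add: roots_of_unity_def ord_divides')
  moreover have "coprime p x"
    using \<open>ord p x dvd k\<close> \<open>k > 0\<close> ord_eq_0[of p x] by auto
  then have "ord p x dvd p - 1"
    using order_divides_totient[of p x] \<open>prime p\<close> by (simp add: totient_prime)
  ultimately have "ord p x = 1"
    using \<open>coprime k (p - 1)\<close> by (metis coprime_iff_gcd_eq_1 gcd_greatest nat_dvd_1_iff_1)
  then show "x \<in> {1}"
    using x prime_gt_1_nat[OF \<open>prime p\<close>]
    by (auto simp: roots_of_unity_def ord_eq_Suc_0_iff intro: cong_less_modulus_unique_nat)
qed (use prime_gt_1_nat[OF \<open>prime p\<close>] in \<open>simp add: roots_of_unity_def\<close>)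

lemma prime_dvd_sum_roots_of_unity_if_nontrivial:
  assumes "prime p" "k > 0" and z: "z \<in> roots_of_unity p k" "z \<noteq> 1"
  shows "p dvd \<Sum>(roots_of_unity p k)"
proof (rule ccontr)
  define R where "R = roots_of_unity p k"
  assume "\<not> p dvd \<Sum>R"
  then have "coprime (\<Sum>R) p"
    using \<open>prime p\<close> by (simp add: prime_imp_coprime coprime_commute)
  have "p > 0"
    using \<open>prime p\<close> by (simp add: prime_gt_0_nat)
  have "ord p z dvd k"
    using z by (simp add: roots_of_unity_def ord_divides')
  then have "coprime z p"
    using \<open>k > 0\<close> ord_eq_0[of p z] by (auto simp: coprime_commute)
  have inj: "inj_on (\<lambda>x. z * x mod p) R"
  proof (rule inj_onI)
    fix x y assume "x \<in> R" "y \<in> R" "z * x mod p = z * y mod p"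
    then have "[x = y] (mod p)"
      using cong_mult_lcancel_nat[OF \<open>coprime z p\<close>] by (simp add: cong_def)
    with \<open>x \<in> R\<close> \<open>y \<in> R\<close> show "x = y"
      by (simp add: R_def roots_of_unity_def cong_less_modulus_unique_nat)
  qed
  moreover have "(\<lambda>x. z * x mod p) ` R \<subseteq> R"
    using roots_of_unity_mult_mod[OF \<open>p > 0\<close> z(1)] by (auto simp: R_def)
  moreover have "finite R"
    by (simp add: R_def roots_of_unity_def)
  ultimately have permutes: "(\<lambda>x. z * x mod p) ` R = R"
    by (intro endo_inj_surj)
  \<comment> \<open>multiplication by \<open>z\<close> permutes \<open>R\<close>, so it fixes \<open>\<Sum>R\<close> modulo \<open>p\<close>\<close>
  have "\<Sum>R = (\<Sum>x\<in>R. z * x mod p)"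
    using sum.reindex[OF inj, of id] by (simp add: permutes)
  also have "[\<dots> = (\<Sum>x\<in>R. z * x)] (mod p)"
    by (intro cong_sum) (simp add: cong_def)
  finally have "[\<Sum>R = z * \<Sum>R] (mod p)"
    by (simp add: sum_distrib_left)
  then have "[1 = z] (mod p)"
    using cong_mult_rcancel_nat[OF \<open>coprime (\<Sum>R) p\<close>, of 1 z] by simp
  moreover have "z < p"
    using z(1) by (simp add: roots_of_unity_def)
  ultimately show False
    using z(2) prime_gt_1_nat[OF \<open>prime p\<close>] cong_less_modulus_unique_nat[of 1 z p] by simp
qed

lemma prime_dvd_sum_roots_of_unity:
  assumes "prime p" "k > 0" "\<not> coprime k (p - 1)"
  shows "p dvd \<Sum>(roots_of_unity p k)"
proof -
  obtain z where z: "z \<in> totatives p" "ord p z = gcd k (p - 1)"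
    using prime_ord_exists[OF \<open>prime p\<close>, of "gcd k (p - 1)"] by auto
  then have "z \<in> roots_of_unity p k"
    using prime_gt_1_nat[OF \<open>prime p\<close>] by (simp add: roots_of_unity_def ord_divides' totatives_less)
  moreover have "z \<noteq> 1"
    using z assms(3) by (metis coprime_iff_gcd_eq_1 ord_1_right)
  ultimately show ?thesis
    using prime_dvd_sum_roots_of_unity_if_nontrivial assms(1,2) by blast
qed

section \<open>Roots of unity modulo a product\<close>

lemma cong_mult_modulus_iff_nat:
  fixes a b m n :: nat
  assumes "coprime m n"
  shows "[a = b] (mod m * n) \<longleftrightarrow> [a = b] (mod m) \<and> [a = b] (mod n)"
  using assms cong_modulus_mult_nat[of a b m n] cong_modulus_mult_nat[of a b n m]
        coprime_cong_mult_nat[of a b m n]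
  by (auto simp: mult.commute)

lemma bij_betw_roots_of_unity_mult:
  assumes "coprime m n" "m > 0" "n > 0"
  shows "bij_betw (\<lambda>a. (a mod m, a mod n))
           (roots_of_unity (m * n) k) (roots_of_unity m k \<times> roots_of_unity n k)"
proof -
  have root_iff: "[a ^ k = 1] (mod m * n) \<longleftrightarrow>
      [(a mod m) ^ k = 1] (mod m) \<and> [(a mod n) ^ k = 1] (mod n)" for a
  proof -
    have "[(a mod l) ^ k = 1] (mod l) \<longleftrightarrow> [a ^ k = 1] (mod l)" for l
      by (simp add: cong_def power_mod)
    then show ?thesis
      using cong_mult_modulus_iff_nat[OF \<open>coprime m n\<close>] by simp
  qed
  show ?thesis
    unfolding bij_betw_def
  proof (intro conjI inj_onI equalityI subsetI)
    fix a b assume "a \<in> roots_of_unity (m * n) k" "b \<in> roots_of_unity (m * n) k"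
      and "(a mod m, a mod n) = (b mod m, b mod n)"
    then have "[a = b] (mod m * n)"
      using cong_mult_modulus_iff_nat[OF \<open>coprime m n\<close>, of a b] by (simp add: cong_def)
    with \<open>a \<in> roots_of_unity (m * n) k\<close> \<open>b \<in> roots_of_unity (m * n) k\<close> show "a = b"
      by (simp add: roots_of_unity_def cong_less_modulus_unique_nat)
  next
    fix z assume "z \<in> (\<lambda>a. (a mod m, a mod n)) ` roots_of_unity (m * n) k"
    then show "z \<in> roots_of_unity m k \<times> roots_of_unity n k"
      using root_iff assms by (auto simp: roots_of_unity_def)
  next
    fix z assume "z \<in> roots_of_unity m k \<times> roots_of_unity n k"
    then obtain x y where xy: "z = (x, y)" "x \<in> roots_of_unity m k" "y \<in> roots_of_unity n k"
      by blast
    obtain c where "[c = x] (mod m)" "[c = y] (mod n)"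
      using binary_chinese_remainder_nat[OF \<open>coprime m n\<close>] by blast
    define a where "a = c mod (m * n)"
    have "a mod m = x" "a mod n = y"
      using \<open>[c = x] (mod m)\<close> \<open>[c = y] (mod n)\<close> xy
      by (simp_all add: a_def cong_def roots_of_unity_def mod_mod_cancel)
    moreover have "a < m * n"
      using assms by (simp add: a_def)
    ultimately have "a \<in> roots_of_unity (m * n) k"
      using xy root_iff[of a] by (simp add: roots_of_unity_def)
    then show "z \<in> (\<lambda>a. (a mod m, a mod n)) ` roots_of_unity (m * n) k"
      using \<open>a mod m = x\<close> \<open>a mod n = y\<close> xy(1) by (intro image_eqI[of _ _ a]) auto
  qed
qed

lemma sum_roots_of_unity_mult_cong:
  assumes "coprime m n" "m > 0" "n > 0"
  shows "[\<Sum>(roots_of_unity (m * n) k)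
          = \<Sum>(roots_of_unity m k) * card (roots_of_unity n k)] (mod m)"
proof -
  have "[\<Sum>(roots_of_unity (m * n) k) = (\<Sum>a\<in>roots_of_unity (m * n) k. fst (a mod m, a mod n))] (mod m)"
    by (intro cong_sum) (simp add: cong_def)
  also have "(\<Sum>a\<in>roots_of_unity (m * n) k. fst (a mod m, a mod n))
      = (\<Sum>z\<in>roots_of_unity m k \<times> roots_of_unity n k. fst z)"
    by (rule sum.reindex_bij_betw[OF bij_betw_roots_of_unity_mult[OF assms]])
  also have "\<dots> = (\<Sum>x\<in>roots_of_unity m k. \<Sum>y\<in>roots_of_unity n k. x)"
    unfolding sum.cartesian_product by (simp add: case_prod_unfold)
  also have "\<dots> = (\<Sum>x\<in>roots_of_unity m k. x * card (roots_of_unity n k))"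
    by (simp add: mult.commute)
  also have "\<dots> = \<Sum>(roots_of_unity m k) * card (roots_of_unity n k)"
    by (rule sum_distrib_right[symmetric])
  finally show ?thesis .
qed

lemma carmichael_eq_Carmichael:
  assumes "m > 0"
  shows "carmichael m = Carmichael m"
  unfolding carmichael_def
proof (rule Least_equality)
  show "0 < Carmichael m \<and> (\<forall>a. coprime a m \<longrightarrow> [a ^ Carmichael m = 1] (mod m))"
    using Carmichael_divides[OF dvd_refl] by (simp add: coprime_commute)
next
  fix k assume k: "0 < k \<and> (\<forall>a. coprime a m \<longrightarrow> [a ^ k = 1] (mod m))"
  obtain g where "g \<in> totatives m" "ord m g = Carmichael m"
    using Carmichael_root_exists[OF assms] by blast
  then have "Carmichael m dvd k"
    using k by (metis ord_divides totatives_def mem_Collect_eq)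
  then show "Carmichael m \<le> k"
    using k by (simp add: dvd_imp_le)
qed

lemma carmichael_prime_mult:
  assumes "prime p" "prime q" "p \<noteq> q"
  shows "carmichael (p * q) = lcm (p - 1) (q - 1)"
  using assms
  by (simp add: carmichael_eq_Carmichael Carmichael_mult_coprime Carmichael_prime
                primes_coprime prime_gt_0_nat)

lemma sum_roots_of_unity_prime_mult_cong:
  assumes p: "prime p" and q: "prime q" "p \<noteq> q"
    and k: "k > 0" "k dvd lcm (p - 1) (q - 1)"
  shows "[int (\<Sum>(roots_of_unity (p * q) k)) = (if coprime k (p - 1) then int k else 0)] (mod int p)"
proof -
  have crt: "[\<Sum>(roots_of_unity (p * q) k)
              = \<Sum>(roots_of_unity p k) * card (roots_of_unity q k)] (mod p)"
    using p q by (intro sum_roots_of_unity_mult_cong) (auto simp: primes_coprime prime_gt_0_nat)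
  show ?thesis
  proof (cases "coprime k (p - 1)")
    case True
    have "k dvd (p - 1) * (q - 1)"
      using dvd_trans[OF k(2) lcm_least[OF dvd_triv_left dvd_triv_right]] .
    with True have "k dvd q - 1"
      by (simp add: coprime_dvd_mult_right_iff)
    with crt True have "[\<Sum>(roots_of_unity (p * q) k) = k] (mod p)"
      using roots_of_unity_prime_coprime[OF p k(1)] card_roots_of_unity_prime[OF q(1)] by simp
    then have "[int (\<Sum>(roots_of_unity (p * q) k)) = int k] (mod int p)"
      by (simp only: cong_int_iff)
    with True show ?thesis
      by simp
  next
    case False
    then have "[\<Sum>(roots_of_unity p k) * card (roots_of_unity q k) = 0] (mod p)"
      using prime_dvd_sum_roots_of_unity[OF p k(1)] by (simp add: cong_0_iff)
    with crt have "[\<Sum>(roots_of_unity (p * q) k) = 0] (mod p)"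
      by (rule cong_trans)
    with False show ?thesis
      by (simp flip: cong_int_iff)
  qed
qed

theorem theorem1p9:
  fixes p q \<delta> :: nat
  assumes "prime p" "prime q" "odd p" "odd q" "p \<noteq> q"
    and "\<delta> > 0" "\<delta> dvd carmichael (p * q)"
  shows "[int (\<Sum>a \<in> {a \<in> {0..<p * q}. coprime a (p * q) \<and> ord (p * q) a = \<delta>}. a)
          = moebius_mu (gcd \<delta> (p - 1)) * Ifl (gcd (\<delta> div gcd \<delta> (p - 1)) (p - 1))
            * int (totient \<delta> div totient (gcd \<delta> (p - 1)))] (mod int p)"
proof -
  have "p - 1 > 0"
    using prime_gt_1_nat[OF \<open>prime p\<close>] by simp
  have "[int (\<Sum>(units_of_order (p * q) \<delta>)) = ord_sum_residue (p - 1) \<delta>] (mod int p)"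
  proof (rule cong_divisor_sums_imp_cong[where L = "lcm (p - 1) (q - 1)"])
    fix k assume k: "k > 0" "k dvd lcm (p - 1) (q - 1)"
    have "(\<Sum>e | e dvd k. int (\<Sum>(units_of_order (p * q) e))) = int (\<Sum>(roots_of_unity (p * q) k))"
      using sum_roots_of_unity_eq_sum_units_of_order[OF \<open>k > 0\<close>] by simp
    also have "[\<dots> = (if coprime k (p - 1) then int k else 0)] (mod int p)"
      using assms k by (intro sum_roots_of_unity_prime_mult_cong)
    also have "(if coprime k (p - 1) then int k else 0) = (\<Sum>e | e dvd k. ord_sum_residue (p - 1) e)"
      using sum_divisors_ord_sum_residue[OF \<open>p - 1 > 0\<close> \<open>k > 0\<close>] by simp
    finally show "[(\<Sum>e | e dvd k. int (\<Sum>(units_of_order (p * q) e)))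
                    = (\<Sum>e | e dvd k. ord_sum_residue (p - 1) e)] (mod int p)" .
  qed (use assms carmichael_prime_mult[OF \<open>prime p\<close> \<open>prime q\<close> \<open>p \<noteq> q\<close>] in simp_all)
  then show ?thesis
    unfolding units_of_order_def ord_sum_residue_def .
qed

end
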